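(* Let $0<\alpha<1/2$ and $\alpha':=\alpha+\frac12$. Define $C_1=\Gamma(\alpha-\frac12)/\sqrt\pi$ and for $k\ge2$ \[ C_k=\frac14\sum_{j=1}^{k-1}\binom kjC_jC_{k-j}+kC_{k-1}\frac{\Gamma(k\alpha+\frac k2-1)}{\Gamma((k-1)\alpha+\frac k2-1)}. \] Then there exists a constant $A<\infty$ depending only on $\alpha$ such that $|C_k/k!|\le A^kk^{\alpha'k}$ for all $k\ge1$.
   Context: $\Gamma$ is Euler's gamma function. *)

theory Defs
  imports "HOL-Analysis.Analysis"
begin

text \<open>The sequence C_k (k >= 1) from the paper, depending on the parameter alpha.
  The value at k = 0 is irrelevant and set to 0.\<close>
fun Cseq :: "real \<Rightarrow> nat \<Rightarrow> real" where
  "Cseq a 0 = 0"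
| "Cseq a (Suc 0) = Gamma (a - 1/2) / sqrt pi"
| "Cseq a (Suc (Suc n)) =
     (let k = Suc (Suc n) in
       (1/4) * (\<Sum>j\<in>{1..<k}. real (k choose j) * Cseq a j * Cseq a (k - j))
       + real k * Cseq a (k - 1) *
         (Gamma (real k * a + real k / 2 - 1) / Gamma ((real k - 1) * a + real k / 2 - 1)))"

end

theory Submission imports Defs begin

text \<open>Put \<open>c\<^sub>k = C\<^sub>k / k!\<close> and \<open>\<beta> = \<alpha> + 1/2\<close>. Dividing the recursion by \<open>k!\<close> turns the
  binomial sum into a plain convolution of the \<open>c\<^sub>j\<close>, and log-convexity of \<open>\<Gamma>\<close> bounds the
  Gamma quotient by \<open>k\<^sup>\<alpha>\<close>. By induction \<open>|c\<^sub>k| \<le> A\<^sup>k (k!)\<^sup>\<beta> / 4\<close>: in the convolution,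
  \<open>(j! (k-j)!)\<^sup>\<beta> = (k!)\<^sup>\<beta> / (k choose j)\<^sup>\<beta>\<close>, and since \<open>\<beta> \<ge> 1/2\<close> the binomial coefficients
  make these terms decay geometrically away from the ends, so the whole sum is
  \<open>O((k!)\<^sup>\<beta>)\<close>; the linear term costs a factor \<open>k\<^sup>\<beta>\<close>, which is exactly the ratio of
  \<open>(k!)\<^sup>\<beta>\<close> to \<open>((k-1)!)\<^sup>\<beta>\<close>. Finally \<open>k! \<le> k\<^sup>k\<close>.\<close>

lemma Gamma_add_le_powr:
  fixes x a :: real
  assumes "x > 0" "0 \<le> a" "a \<le> 1"
  shows "Gamma (x + a) \<le> Gamma x * x powr a"
proof -
  have "(ln \<circ> Gamma) ((1 - a) *\<^sub>R x + a *\<^sub>R (x + 1))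
      \<le> (1 - a) * (ln \<circ> Gamma) x + a * (ln \<circ> Gamma) (x + 1)"
    using assms by (intro convex_onD[OF log_convex_Gamma_real]) auto
  moreover have "(1 - a) *\<^sub>R x + a *\<^sub>R (x + 1) = x + a" by (simp add: algebra_simps)
  moreover have "Gamma (x + 1) = x * Gamma x"
    using assms by (intro Gamma_plus1) (auto elim!: nonpos_Ints_cases)
  moreover have Gamma_pos: "Gamma x > 0" using assms by simp
  ultimately have "ln (Gamma (x + a)) \<le> (1 - a) * ln (Gamma x) + a * ln (x * Gamma x)" by simp
  also have "\<dots> = ln (Gamma x) + a * ln x"
    using ln_mult_pos[OF assms(1) Gamma_pos] by (simp add: algebra_simps)
  finally have "exp (ln (Gamma (x + a))) \<le> exp (ln (Gamma x) + a * ln x)" by simp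
  then show ?thesis using assms by (simp add: exp_add powr_def mult.commute)
qed

lemma binomial_ge_16_9_pow:
  assumes "2 * j \<le> k"
  shows "(16/9::real) ^ j \<le> real (k choose j)"
proof (cases "j = 0")
  case False
  have "(16/9::real) ^ j \<le> 2 ^ j" by (intro power_mono) auto
  also have "\<dots> \<le> (real k / real j) ^ j"
    using assms False by (intro power_mono) (auto simp: field_simps)
  also have "\<dots> \<le> real (k choose j)" using assms by (intro binomial_ge_n_over_k_pow_k) auto
  finally show ?thesis .
qed simp

lemma inverse_binomial_powr_le:
  fixes b :: real
  assumes "j \<le> k" "1/2 \<le> b"
  shows "1 / real (k choose j) powr b \<le> (3/4) ^ j + (3/4) ^ (k - j)"
proof -
  obtain i where i: "i = j \<or> i = k - j" "2 * i \<le> k" "k choose i = k choose j"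
    using assms(1) binomial_symmetric[OF assms(1)] by (cases "2 * j \<le> k") auto
  have binom_ge_1: "real (k choose j) \<ge> 1" using assms by (simp add: Suc_leI)
  have "(4/3::real) ^ i = sqrt ((16/9) ^ i)"
    by (simp add: real_sqrt_power real_sqrt_divide)
  also have "\<dots> \<le> sqrt (real (k choose j))"
    using binomial_ge_16_9_pow[OF i(2)] i(3) by simp
  also have "\<dots> = real (k choose j) powr (1/2)" using binom_ge_1 by (simp add: powr_half_sqrt)
  also have "\<dots> \<le> real (k choose j) powr b" using binom_ge_1 assms by (intro powr_mono) auto
  finally have "1 / real (k choose j) powr b \<le> 1 / (4/3) ^ i"
    using binom_ge_1 assms by (intro divide_left_mono mult_pos_pos) auto
  also have "\<dots> = (3/4) ^ i" by (simp add: power_divide)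
  also have "\<dots> \<le> (3/4) ^ j + (3/4) ^ (k - j)" using i(1) by auto
  finally show ?thesis .
qed

lemma sum_two_sided_geometric_le: "(\<Sum>j\<in>{1..<k}. (3/4::real) ^ j + (3/4) ^ (k - j)) \<le> 8"
proof -
  have "(\<Sum>j\<in>{1..<k}. (3/4::real) ^ (k - j)) = (\<Sum>j\<in>{1..<k}. (3/4) ^ j)"
    by (rule sum.reindex_bij_witness[of _ "\<lambda>i. k - i" "\<lambda>i. k - i"]) auto
  moreover have "(\<Sum>j\<in>{1..<k}. (3/4::real) ^ j) \<le> (\<Sum>j<k. (3/4) ^ j)"
    by (intro sum_mono2) auto
  moreover have "(\<Sum>j<k. (3/4::real) ^ j) \<le> 4" by (simp add: sum_gp_strict)
  ultimately show ?thesis by (simp add: sum.distrib)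
qed

lemma sum_fact_powr_convolution_le:
  fixes b :: real
  assumes "1/2 \<le> b"
  shows "(\<Sum>j\<in>{1..<k}. fact j powr b * fact (k - j) powr b) \<le> 8 * fact k powr b"
proof -
  have "fact j powr b * fact (k - j) powr b
      \<le> fact k powr b * ((3/4) ^ j + (3/4) ^ (k - j))" if "j \<in> {1..<k}" for j
  proof -
    have "(fact j * fact (k - j) :: real) = fact k / real (k choose j)"
      using that by (simp add: binomial_fact)
    then have "fact j powr b * fact (k - j) powr b = fact k powr b * (1 / real (k choose j) powr b)"
      by (simp add: powr_mult[symmetric] powr_divide)
    also have "\<dots> \<le> fact k powr b * ((3/4) ^ j + (3/4) ^ (k - j))"
      using that assms by (intro mult_left_mono inverse_binomial_powr_le) auto
    finally show ?thesis .
  qed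
  then have "(\<Sum>j\<in>{1..<k}. fact j powr b * fact (k - j) powr b)
      \<le> fact k powr b * (\<Sum>j\<in>{1..<k}. (3/4) ^ j + (3/4) ^ (k - j))"
    unfolding sum_distrib_left by (rule sum_mono)
  also have "\<dots> \<le> fact k powr b * 8"
    by (intro mult_left_mono sum_two_sided_geometric_le) auto
  finally show ?thesis by simp
qed

lemma convolution_recurrence_fact_powr_bound:
  fixes c :: "nat \<Rightarrow> real" and A b :: real
  assumes b: "1/2 \<le> b"
    and rec: "\<And>k. 2 \<le> k \<Longrightarrow>
      \<bar>c k\<bar> \<le> 1/4 * (\<Sum>j\<in>{1..<k}. \<bar>c j\<bar> * \<bar>c (k - j)\<bar>) + real k powr b * \<bar>c (k - 1)\<bar>"
    and A: "2 \<le> A" "4 * \<bar>c 1\<bar> \<le> A"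
  shows "1 \<le> k \<Longrightarrow> \<bar>c k\<bar> \<le> A ^ k * fact k powr b / 4"
proof (induction k rule: less_induct)
  case (less k)
  show ?case
  proof (cases "k = 1")
    case False
    with less.prems have k: "2 \<le> k" by simp
    have "(\<Sum>j\<in>{1..<k}. \<bar>c j\<bar> * \<bar>c (k - j)\<bar>)
        \<le> (\<Sum>j\<in>{1..<k}. (A ^ j * fact j powr b / 4) * (A ^ (k - j) * fact (k - j) powr b / 4))"
      using A by (intro sum_mono mult_mono less.IH) auto
    also have "\<dots> = A ^ k / 16 * (\<Sum>j\<in>{1..<k}. fact j powr b * fact (k - j) powr b)"
      by (auto simp: sum_distrib_left power_add[symmetric] intro!: sum.cong)
    also have "\<dots> \<le> A ^ k / 16 * (8 * fact k powr b)"
      using A by (intro mult_left_mono sum_fact_powr_convolution_le b) auto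
    finally have conv: "(\<Sum>j\<in>{1..<k}. \<bar>c j\<bar> * \<bar>c (k - j)\<bar>) \<le> A ^ k * fact k powr b / 2"
      by simp
    have "real k powr b * \<bar>c (k - 1)\<bar>
        \<le> real k powr b * (A ^ (k - 1) * fact (k - 1) powr b / 4)"
      using k by (intro mult_left_mono less.IH) auto
    also have "\<dots> = A ^ (k - 1) * fact k powr b / 4"
      using k by (simp add: fact_reduce powr_mult)
    also have "\<dots> \<le> A ^ k * fact k powr b / 8"
      using k A mult_right_mono[of 2 A "A ^ (k - 1) * fact k powr b"]
      by (cases k) (auto simp: field_simps)
    finally have lin: "real k powr b * \<bar>c (k - 1)\<bar> \<le> A ^ k * fact k powr b / 8" .
    show ?thesis using rec[OF k] conv lin by simp
  qed (use A in simp)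
qed

definition Cseq_gamma_ratio :: "real \<Rightarrow> nat \<Rightarrow> real" where
  "Cseq_gamma_ratio a k =
     Gamma (real k * a + real k / 2 - 1) / Gamma ((real k - 1) * a + real k / 2 - 1)"

lemma Cseq_div_fact_rec:
  assumes "2 \<le> k"
  shows "Cseq a k / fact k =
           1/4 * (\<Sum>j\<in>{1..<k}. (Cseq a j / fact j) * (Cseq a (k - j) / fact (k - j)))
           + Cseq a (k - 1) / fact (k - 1) * Cseq_gamma_ratio a k"
proof -
  obtain n where n: "k = Suc (Suc n)" using assms by (metis add_2_eq_Suc le_Suc_ex)
  have "Cseq a k = 1/4 * (\<Sum>j\<in>{1..<k}. real (k choose j) * Cseq a j * Cseq a (k - j))
      + real k * Cseq a (k - 1) * Cseq_gamma_ratio a k"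
    unfolding n Cseq_gamma_ratio_def by (simp only: Cseq.simps Let_def)
  moreover have "(\<Sum>j\<in>{1..<k}. real (k choose j) * Cseq a j * Cseq a (k - j)) / fact k
      = (\<Sum>j\<in>{1..<k}. (Cseq a j / fact j) * (Cseq a (k - j) / fact (k - j)))"
    unfolding sum_divide_distrib by (intro sum.cong) (auto simp: binomial_fact field_simps)
  moreover have "real k * Cseq a (k - 1) * Cseq_gamma_ratio a k / fact k
      = Cseq a (k - 1) / fact (k - 1) * Cseq_gamma_ratio a k"
    using assms by (simp add: fact_reduce field_simps)
  ultimately show ?thesis by (simp add: add_divide_distrib)
qed

lemma Cseq_gamma_ratio_bounds:
  assumes "0 < a" "a < 1/2" "2 \<le> k"
  shows "0 \<le> Cseq_gamma_ratio a k" "Cseq_gamma_ratio a k \<le> real k powr a"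
proof -
  define x where "x = (real k - 1) * a + real k / 2 - 1"
  have k: "2 \<le> real k" using assms by simp
  have "0 < (real k - 1) * a" using assms k by simp
  then have x_pos: "0 < x" using k unfolding x_def by linarith
  have "(real k - 1) * a \<le> (real k - 1) / 2"
    using assms k mult_left_mono[of a "1/2" "real k - 1"] by simp
  then have x_le: "x \<le> real k" unfolding x_def by (simp add: field_simps)
  have ratio: "Cseq_gamma_ratio a k = Gamma (x + a) / Gamma x"
    unfolding Cseq_gamma_ratio_def x_def by (simp add: algebra_simps)
  show "0 \<le> Cseq_gamma_ratio a k" unfolding ratio using x_pos assms by simp
  have "Gamma (x + a) / Gamma x \<le> x powr a"
    using Gamma_add_le_powr[of x a] x_pos assms by (simp add: divide_le_eq mult.commute)
  also have "\<dots> \<le> real k powr a" using x_pos x_le assms by (intro powr_mono2) auto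
  finally show "Cseq_gamma_ratio a k \<le> real k powr a" unfolding ratio .
qed

lemma Cseq_div_fact_abs_rec:
  assumes "0 < a" "a < 1/2" "2 \<le> k"
  shows "\<bar>Cseq a k / fact k\<bar> \<le>
           1/4 * (\<Sum>j\<in>{1..<k}. \<bar>Cseq a j / fact j\<bar> * \<bar>Cseq a (k - j) / fact (k - j)\<bar>)
           + real k powr (a + 1/2) * \<bar>Cseq a (k - 1) / fact (k - 1)\<bar>"
proof -
  have "real k powr a \<le> real k powr (a + 1/2)" using assms by (intro powr_mono) auto
  then have "\<bar>Cseq_gamma_ratio a k\<bar> \<le> real k powr (a + 1/2)"
    using Cseq_gamma_ratio_bounds[OF assms] by simp
  then have "\<bar>Cseq a (k - 1) / fact (k - 1) * Cseq_gamma_ratio a k\<bar>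
      \<le> real k powr (a + 1/2) * \<bar>Cseq a (k - 1) / fact (k - 1)\<bar>"
    unfolding abs_mult by (metis abs_ge_zero mult.commute mult_left_mono)
  then show ?thesis
    unfolding Cseq_div_fact_rec[OF assms(3)]
    by (intro order_trans[OF abs_triangle_ineq] add_mono)
       (auto simp: abs_mult mult.commute intro!: order_trans[OF sum_abs] mult_left_mono)
qed

theorem lemma3p4:
  fixes \<alpha> :: real
  assumes "0 < \<alpha>" and "\<alpha> < 1/2"
  shows "\<exists>A::real. \<forall>k::nat. k \<ge> 1 \<longrightarrow>
           \<bar>Cseq \<alpha> k / fact k\<bar> \<le> A ^ k * (real k) powr ((\<alpha> + 1/2) * real k)"
proof (intro exI allI impI)
  define A where "A = max 2 (4 * \<bar>Cseq \<alpha> 1 / fact 1\<bar>)"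
  fix k :: nat assume k: "k \<ge> 1"
  have "\<bar>Cseq \<alpha> k / fact k\<bar> \<le> A ^ k * fact k powr (\<alpha> + 1/2) / 4"
    using k assms Cseq_div_fact_abs_rec[OF assms] unfolding A_def
    by (intro convolution_recurrence_fact_powr_bound[where c = "\<lambda>k. Cseq \<alpha> k / fact k"]) auto
  also have "\<dots> \<le> A ^ k * fact k powr (\<alpha> + 1/2)"
    unfolding A_def by simp
  also have "\<dots> \<le> A ^ k * (real k ^ k) powr (\<alpha> + 1/2)"
    using assms fact_le_power[of k] unfolding A_def by (intro mult_left_mono powr_mono2) auto
  also have "(real k ^ k) powr (\<alpha> + 1/2) = real k powr ((\<alpha> + 1/2) * real k)"
    using k by (simp add: powr_realpow[symmetric] powr_powr mult.commute)
  finally show "\<bar>Cseq \<alpha> k / fact k\<bar> \<le> A ^ k * real k powr ((\<alpha> + 1/2) * real k)" .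
qed

end
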